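(* Let $G$ be a graph and let $n\geq 2$. Then the set of distinct Laplacian eigenvalues of the blow-up $\uparrow^{n}G$ is $$\sigma\left(\uparrow^{n}G\right)=n\cdot\sigma(G)\cup \{n\, d_u:u\in V(G)\}.$$ Moreover, for any vertex $u$ of $G$ and any $j\in\mathbb{Z}_n$, $$\sigma_{(j,u)}\left(\uparrow^{n}G\right)=n\cdot\sigma_u(G)\cup\{n\, d_u\}.$$
   Context: All graphs are simple, undirected and unweighted. For a graph $G$ with vertex set $V$, $d_u$ is the degree of vertex $u$, and $L=D-A$ is its Laplacian matrix ($D$ the diagonal degree matrix, $A$ the adjacency matrix). $\sigma(G)$ denotes the set of distinct Laplacian eigenvalues of $G$. If $L=\sum_{\lambda\in\sigma(G)}\lambda E_\lambda$ is the spectral decomposition ($E_\lambda$ the orthogonal projection onto the $\lambda$-eigenspace), the eigenvalue support of a vertex $u$ is $\sigma_u(G)=\{\lambda\in\sigma(G): E_\lambda\mathbf{e}_u\neq \mathbf{0}\}$. For a set $S$ of numbers, $n\cdot S=\{ns:s\in S\}$. The blow-up $\uparrow^{n}G$ of $n$ copies of $G$ is the graph with vertex set $\mathbb{Z}_n\times V$, in which $(l,u)$ and $(m,v)$ are adjacent if and only if $u$ and $v$ are adjacent in $G$. *)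

theory Defs
  imports Complex_Main
begin

definition simple_graph :: "'a set \<Rightarrow> ('a \<Rightarrow> 'a \<Rightarrow> bool) \<Rightarrow> bool" where
  "simple_graph V E \<longleftrightarrow> finite V \<and> (\<forall>u v. E u v \<longrightarrow> u \<in> V \<and> v \<in> V)
     \<and> (\<forall>u v. E u v \<longrightarrow> E v u) \<and> (\<forall>u. \<not> E u u)"

definition degree :: "'a set \<Rightarrow> ('a \<Rightarrow> 'a \<Rightarrow> bool) \<Rightarrow> 'a \<Rightarrow> nat" where
  "degree V E u = card {v \<in> V. E u v}"

definition laplacian :: "'a set \<Rightarrow> ('a \<Rightarrow> 'a \<Rightarrow> bool) \<Rightarrow> 'a \<Rightarrow> 'a \<Rightarrow> real" where
  "laplacian V E u v = (if u = v then real (degree V E u) else 0) - (if E u v then 1 else 0)"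

definition vecs :: "'a set \<Rightarrow> ('a \<Rightarrow> real) set" where
  "vecs V = {x. \<forall>w. w \<notin> V \<longrightarrow> x w = 0}"

definition lap_mult :: "'a set \<Rightarrow> ('a \<Rightarrow> 'a \<Rightarrow> bool) \<Rightarrow> ('a \<Rightarrow> real) \<Rightarrow> ('a \<Rightarrow> real)" where
  "lap_mult V E x = (\<lambda>u. if u \<in> V then (\<Sum>v\<in>V. laplacian V E u v * x v) else 0)"

definition eigenspace :: "'a set \<Rightarrow> ('a \<Rightarrow> 'a \<Rightarrow> bool) \<Rightarrow> real \<Rightarrow> ('a \<Rightarrow> real) set" where
  "eigenspace V E mu = {x \<in> vecs V. lap_mult V E x = (\<lambda>u. mu * x u)}"

definition lap_spectrum :: "'a set \<Rightarrow> ('a \<Rightarrow> 'a \<Rightarrow> bool) \<Rightarrow> real set" where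
  "lap_spectrum V E = {mu. \<exists>x \<in> eigenspace V E mu. x \<noteq> (\<lambda>_. 0)}"

definition vinner :: "'a set \<Rightarrow> ('a \<Rightarrow> real) \<Rightarrow> ('a \<Rightarrow> real) \<Rightarrow> real" where
  "vinner V x y = (\<Sum>v\<in>V. x v * y v)"

definition oproj :: "'a set \<Rightarrow> ('a \<Rightarrow> real) set \<Rightarrow> ('a \<Rightarrow> real) \<Rightarrow> ('a \<Rightarrow> real)" where
  "oproj V W x = (THE p. p \<in> W \<and> (\<forall>w \<in> W. vinner V (\<lambda>v. x v - p v) w = 0))"

definition unit_vec :: "'a \<Rightarrow> ('a \<Rightarrow> real)" where
  "unit_vec u = (\<lambda>v. if v = u then 1 else 0)"

definition eig_support :: "'a set \<Rightarrow> ('a \<Rightarrow> 'a \<Rightarrow> bool) \<Rightarrow> 'a \<Rightarrow> real set" where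
  "eig_support V E u =
     {mu \<in> lap_spectrum V E. oproj V (eigenspace V E mu) (unit_vec u) \<noteq> (\<lambda>_. 0)}"

definition blowup_V :: "nat \<Rightarrow> 'a set \<Rightarrow> (nat \<times> 'a) set" where
  "blowup_V n V = {0..<n} \<times> V"

definition blowup_E :: "nat \<Rightarrow> ('a \<Rightarrow> 'a \<Rightarrow> bool) \<Rightarrow> nat \<times> 'a \<Rightarrow> nat \<times> 'a \<Rightarrow> bool" where
  "blowup_E n E p q \<longleftrightarrow> fst p < n \<and> fst q < n \<and> E (snd p) (snd q)"

end

theory Submission
  imports Defs
begin

(* An eigenvector x of the blow-up for \<mu> either has nonzero fibre sum s u = \<Sum>l. x (l, u), and then
   the fibre sums form an eigenvector of G for \<mu>/n, or \<mu> = n d_u: otherwise the eigen-equation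
   n d_u x (l, u) - (A s) u = \<mu> x (l, u) forces x to be constant on the fibre of u, so s u = n x (j, u).
   Conversely, eigenvectors of G lift to the blow-up, and zero-sum vectors supported on a single
   fibre (nonzero ones exist as n \<ge> 2) are eigenvectors for n d_u.  Since E_\<mu> e_u \<noteq> 0 iff some
   \<mu>-eigenvector does not vanish at u, this determines \<sigma>_(j,u); and \<sigma> is the union of all \<sigma>_u. *)

lemma vinner_commute: "vinner U a b = vinner U b a"
  by (simp add: vinner_def mult.commute)

lemma vinner_diff_left: "vinner U (\<lambda>v. a v - b v) w = vinner U a w - vinner U b w"
  by (simp add: vinner_def left_diff_distrib sum_subtractf)

lemma vinner_scale_left: "vinner U (\<lambda>v. c * a v) w = c * vinner U a w"
  by (simp add: vinner_def sum_distrib_left mult.assoc)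

lemma vinner_add_right: "vinner U w (\<lambda>v. a v + b v) = vinner U w a + vinner U w b"
  by (simp add: vinner_def distrib_left sum.distrib)

lemma vinner_scale_right: "vinner U w (\<lambda>v. c * a v) = c * vinner U w a"
  by (simp add: vinner_def sum_distrib_left mult.left_commute)

lemma vinner_unit_vec:
  assumes "finite U" "u \<in> U"
  shows "vinner U (unit_vec u) w = w u"
proof -
  have "vinner U (unit_vec u) w = (\<Sum>v\<in>U. if v = u then w v else 0)"
    unfolding vinner_def unit_vec_def by (rule sum.cong) auto
  then show ?thesis
    using assms by simp
qed

lemma vinner_self_eq_0_iff:
  assumes "finite U"
  shows "vinner U d d = 0 \<longleftrightarrow> (\<forall>v\<in>U. d v = 0)"
  using sum_nonneg_eq_0_iff[OF assms, of "\<lambda>v. d v * d v"] by (simp add: vinner_def)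

definition vec_subspace :: "('a \<Rightarrow> real) set \<Rightarrow> bool" where
  "vec_subspace W \<longleftrightarrow> (\<lambda>_. 0) \<in> W \<and> (\<forall>a\<in>W. \<forall>b\<in>W. (\<lambda>v. a v + b v) \<in> W)
     \<and> (\<forall>c. \<forall>a\<in>W. (\<lambda>v. c * a v) \<in> W)"

lemma vec_subspace_zero: "vec_subspace W \<Longrightarrow> (\<lambda>_. 0) \<in> W"
  and vec_subspace_add: "vec_subspace W \<Longrightarrow> a \<in> W \<Longrightarrow> b \<in> W \<Longrightarrow> (\<lambda>v. a v + b v) \<in> W"
  and vec_subspace_scale: "vec_subspace W \<Longrightarrow> a \<in> W \<Longrightarrow> (\<lambda>v. c * a v) \<in> W"
  unfolding vec_subspace_def by blast+

lemma vec_subspace_diff: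
  assumes "vec_subspace W" "a \<in> W" "b \<in> W"
  shows "(\<lambda>v. a v - b v) \<in> W"
  using vec_subspace_add[OF assms(1,2) vec_subspace_scale[OF assms(1,3), of "-1"]] by simp

definition is_oproj :: "'a set \<Rightarrow> ('a \<Rightarrow> real) set \<Rightarrow> ('a \<Rightarrow> real) \<Rightarrow> ('a \<Rightarrow> real) \<Rightarrow> bool" where
  "is_oproj V W x p \<longleftrightarrow> p \<in> W \<and> (\<forall>w\<in>W. vinner V (\<lambda>v. x v - p v) w = 0)"

lemma is_oproj_unique:
  assumes "finite V" "W \<subseteq> vecs V" "vec_subspace W" "is_oproj V W x p" "is_oproj V W x q"
  shows "p = q"
proof -
  define d where "d = (\<lambda>v. p v - q v)"
  have "d \<in> W"
    using assms(3-5) by (simp add: d_def is_oproj_def vec_subspace_diff)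
  then have "vinner V d d = vinner V (\<lambda>v. x v - q v) d - vinner V (\<lambda>v. x v - p v) d"
    by (simp add: d_def flip: vinner_diff_left)
  also have "\<dots> = 0"
    using \<open>d \<in> W\<close> assms(4,5) by (simp add: is_oproj_def)
  finally have "\<forall>v\<in>V. d v = 0"
    using vinner_self_eq_0_iff[OF assms(1)] by blast
  moreover have "p \<in> vecs V" "q \<in> vecs V"
    using assms(2,4,5) by (auto simp: is_oproj_def)
  ultimately show ?thesis
    by (fastforce simp: d_def vecs_def)
qed

lemma is_oproj_extend:
  assumes "vec_subspace W" "W0 \<subseteq> W" "f \<in> W" "vinner U f f \<noteq> 0"
    and f_orth: "\<forall>w\<in>W0. vinner U f w = 0"
    and decomp: "\<forall>w\<in>W. \<exists>k. (\<lambda>v. w v - k * f v) \<in> W0"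
    and p0: "is_oproj U W0 x p0"
  shows "is_oproj U W x (\<lambda>v. p0 v + vinner U x f / vinner U f f * f v)"
proof -
  define c where "c = vinner U x f / vinner U f f"
  define r where "r = (\<lambda>v. x v - p0 v)"
  have res: "(\<lambda>v. x v - (p0 v + c * f v)) = (\<lambda>v. r v - c * f v)"
    by (simp add: r_def algebra_simps)
  have r_orth: "vinner U r w = 0" if "w \<in> W0" for w
    using p0 that by (simp add: is_oproj_def r_def)
  have "vinner U r f = vinner U x f"
    using p0 f_orth by (simp add: r_def is_oproj_def vinner_diff_left vinner_commute[of U p0 f])
  moreover have "c * vinner U f f = vinner U x f"
    using assms(4) by (simp add: c_def)
  ultimately have orth_f: "vinner U (\<lambda>v. r v - c * f v) f = 0"
    by (simp add: vinner_diff_left vinner_scale_left)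
  have "vinner U (\<lambda>v. r v - c * f v) w = 0" if "w \<in> W" for w
  proof -
    obtain k where w0: "(\<lambda>v. w v - k * f v) \<in> W0"
      using decomp \<open>w \<in> W\<close> by blast
    have "vinner U (\<lambda>v. r v - c * f v) w
        = vinner U (\<lambda>v. r v - c * f v) (\<lambda>v. (w v - k * f v) + k * f v)"
      by simp
    also have "\<dots> = vinner U (\<lambda>v. r v - c * f v) (\<lambda>v. w v - k * f v)
          + k * vinner U (\<lambda>v. r v - c * f v) f"
      by (simp only: vinner_add_right vinner_scale_right)
    also have "\<dots> = 0"
    proof -
      have "vinner U (\<lambda>v. r v - c * f v) (\<lambda>v. w v - k * f v)
          = vinner U r (\<lambda>v. w v - k * f v) - c * vinner U f (\<lambda>v. w v - k * f v)"
        by (simp only: vinner_diff_left vinner_scale_left)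
      then show ?thesis
        using r_orth[OF w0] f_orth w0 orth_f by simp
    qed
    finally show ?thesis .
  qed
  moreover have "(\<lambda>v. p0 v + c * f v) \<in> W"
    using assms(1-3) p0 by (auto simp: is_oproj_def intro: vec_subspace_add vec_subspace_scale)
  ultimately show ?thesis
    unfolding is_oproj_def c_def[symmetric] res by blast
qed

(* Induction on a finite support S of W: W0 = {w \<in> W. w a = 0} is supported on S, and
   W = W0 + \<real> f, where f = w1 - proj_W0 w1 is orthogonal to W0 and f a \<noteq> 0. *)
lemma is_oproj_exists:
  assumes "finite V" "W \<subseteq> vecs V" "vec_subspace W"
  shows "\<exists>p. is_oproj V W x p"
proof -
  have "\<exists>p. is_oproj V W x p" if "finite S" "S \<subseteq> V" "W \<subseteq> vecs S" "vec_subspace W" for S W x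
    using that
  proof (induction S arbitrary: W x rule: finite_induct)
    case empty
    then have "W = {\<lambda>_. 0}"
      by (auto simp: vecs_def vec_subspace_def)
    then show ?case
      by (simp add: is_oproj_def vinner_def)
  next
    case (insert a S)
    define W0 where "W0 = {w \<in> W. w a = 0}"
    have "W0 \<subseteq> vecs S" "vec_subspace W0"
      using insert.prems by (auto simp: W0_def vecs_def vec_subspace_def)
    then have proj0: "\<exists>p. is_oproj V W0 y p" for y
      using insert.IH insert.prems(1) by blast
    show ?case
    proof (cases "W0 = W")
      case True
      then show ?thesis using proj0 by simp
    next
      case False
      then obtain w1 where w1: "w1 \<in> W" "w1 a \<noteq> 0"
        by (auto simp: W0_def)
      obtain p1 where p1: "is_oproj V W0 w1 p1"
        using proj0 by blast
      define f where "f = (\<lambda>v. w1 v - p1 v)"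
      have "f \<in> W" "f a \<noteq> 0"
        using p1 w1 insert.prems(3) by (auto simp: f_def is_oproj_def W0_def vec_subspace_diff)
      have "vinner V f f \<noteq> 0"
        using \<open>f a \<noteq> 0\<close> insert.prems(1) vinner_self_eq_0_iff[OF assms(1)] by blast
      have f_orth: "\<forall>w\<in>W0. vinner V f w = 0"
        using p1 by (simp add: is_oproj_def f_def)
      have decomp: "\<forall>w\<in>W. \<exists>k. (\<lambda>v. w v - k * f v) \<in> W0"
      proof
        fix w assume "w \<in> W"
        then have "(\<lambda>v. w v - w a / f a * f v) \<in> W0"
          using \<open>f \<in> W\<close> \<open>f a \<noteq> 0\<close> insert.prems(3)
          by (simp add: W0_def vec_subspace_diff vec_subspace_scale del: times_divide_eq_left)
             (simp add: field_simps)
        then show "\<exists>k. (\<lambda>v. w v - k * f v) \<in> W0" ..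
      qed
      obtain p0 where "is_oproj V W0 x p0"
        using proj0 by blast
      moreover have "W0 \<subseteq> W"
        by (auto simp: W0_def)
      ultimately show ?thesis
        using is_oproj_extend[OF insert.prems(3) _ \<open>f \<in> W\<close> \<open>vinner V f f \<noteq> 0\<close> f_orth decomp]
        by blast
    qed
  qed
  from this[OF assms(1) subset_refl assms(2,3)] show ?thesis .
qed

lemma oproj_is_oproj:
  assumes "finite V" "W \<subseteq> vecs V" "vec_subspace W"
  shows "is_oproj V W x (oproj V W x)"
proof -
  have "\<exists>!p. is_oproj V W x p"
    using is_oproj_exists[OF assms] is_oproj_unique[OF assms] by blast
  then show ?thesis
    unfolding oproj_def is_oproj_def[symmetric] by (rule theI')
qed

lemma oproj_eqI:
  assumes "finite V" "W \<subseteq> vecs V" "vec_subspace W" "is_oproj V W x p"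
  shows "oproj V W x = p"
  using is_oproj_unique[OF assms(1-3) oproj_is_oproj[OF assms(1-3)] assms(4)] .

lemma oproj_eq_0_iff:
  assumes "finite V" "W \<subseteq> vecs V" "vec_subspace W"
  shows "oproj V W x = (\<lambda>_. 0) \<longleftrightarrow> (\<forall>w\<in>W. vinner V x w = 0)"
proof
  assume "oproj V W x = (\<lambda>_. 0)"
  then show "\<forall>w\<in>W. vinner V x w = 0"
    using oproj_is_oproj[OF assms, of x] by (simp add: is_oproj_def)
next
  assume "\<forall>w\<in>W. vinner V x w = 0"
  then have "is_oproj V W x (\<lambda>_. 0)"
    using vec_subspace_zero[OF assms(3)] by (simp add: is_oproj_def)
  then show "oproj V W x = (\<lambda>_. 0)"
    using oproj_eqI[OF assms] by blast
qed

lemma oproj_unit_vec_eq_0_iff: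
  assumes "finite V" "W \<subseteq> vecs V" "vec_subspace W" "u \<in> V"
  shows "oproj V W (unit_vec u) = (\<lambda>_. 0) \<longleftrightarrow> (\<forall>w\<in>W. w u = 0)"
  using assms by (simp add: oproj_eq_0_iff vinner_unit_vec)

definition adj_mult :: "'a set \<Rightarrow> ('a \<Rightarrow> 'a \<Rightarrow> bool) \<Rightarrow> ('a \<Rightarrow> real) \<Rightarrow> 'a \<Rightarrow> real" where
  "adj_mult V E x u = (\<Sum>v\<in>V. if E u v then x v else 0)"

lemma lap_mult_eq:
  assumes "finite V" "u \<in> V"
  shows "lap_mult V E x u = real (degree V E u) * x u - adj_mult V E x u"
proof -
  have "lap_mult V E x u = (\<Sum>v\<in>V. laplacian V E u v * x v)"
    using assms(2) by (simp add: lap_mult_def)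
  also have "\<dots> = (\<Sum>v\<in>V. (if u = v then real (degree V E u) * x v else 0)
      - (if E u v then x v else 0))"
    by (rule sum.cong) (auto simp: laplacian_def left_diff_distrib)
  also have "\<dots> = real (degree V E u) * x u - adj_mult V E x u"
    using assms by (simp add: sum_subtractf adj_mult_def)
  finally show ?thesis .
qed

lemma lap_mult_add: "lap_mult V E (\<lambda>v. a v + b v) u = lap_mult V E a u + lap_mult V E b u"
  by (simp add: lap_mult_def sum.distrib distrib_left)

lemma lap_mult_scale: "lap_mult V E (\<lambda>v. c * a v) u = c * lap_mult V E a u"
  by (simp add: lap_mult_def sum_distrib_left mult.left_commute)

lemma eigenspace_iff:
  "x \<in> eigenspace V E mu \<longleftrightarrow> x \<in> vecs V \<and> (\<forall>u\<in>V. lap_mult V E x u = mu * x u)"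
  by (auto simp: eigenspace_def vecs_def lap_mult_def fun_eq_iff)

lemma eigenspace_subset_vecs: "eigenspace V E mu \<subseteq> vecs V"
  by (auto simp: eigenspace_def)

lemma vec_subspace_eigenspace: "vec_subspace (eigenspace V E mu)"
  by (auto simp: vec_subspace_def eigenspace_iff vecs_def lap_mult_add lap_mult_scale
      algebra_simps) (simp add: lap_mult_def)

lemma eig_support_eq:
  assumes "finite V" "u \<in> V"
  shows "eig_support V E u = {mu. \<exists>x\<in>eigenspace V E mu. x u \<noteq> 0}"
  using oproj_unit_vec_eq_0_iff[OF assms(1) eigenspace_subset_vecs vec_subspace_eigenspace assms(2)]
  by (auto simp: eig_support_def lap_spectrum_def fun_eq_iff)

lemma lap_spectrum_eq_Union_eig_support:
  assumes "finite V"
  shows "lap_spectrum V E = (\<Union>u\<in>V. eig_support V E u)"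
proof -
  have "x \<noteq> (\<lambda>_. 0) \<longleftrightarrow> (\<exists>u\<in>V. x u \<noteq> 0)" if "x \<in> eigenspace V E mu" for x mu
    using that eigenspace_subset_vecs by (fastforce simp: vecs_def fun_eq_iff)
  then show ?thesis
    using assms by (auto simp: lap_spectrum_def eig_support_eq)
qed

definition fibre_sum :: "nat \<Rightarrow> (nat \<times> 'a \<Rightarrow> real) \<Rightarrow> 'a \<Rightarrow> real" where
  "fibre_sum n x v = (\<Sum>l\<in>{0..<n}. x (l, v))"

definition blowup_lift :: "nat \<Rightarrow> ('a \<Rightarrow> real) \<Rightarrow> nat \<times> 'a \<Rightarrow> real" where
  "blowup_lift n y = (\<lambda>(l, v). if l < n then y v else 0)"

definition fibre_vec :: "nat \<Rightarrow> 'a \<Rightarrow> (nat \<Rightarrow> real) \<Rightarrow> nat \<times> 'a \<Rightarrow> real" where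
  "fibre_vec n u z = (\<lambda>(l, v). if l < n \<and> v = u then z l else 0)"

lemma degree_blowup:
  assumes "l < n"
  shows "degree (blowup_V n V) (blowup_E n E) (l, u) = n * degree V E u"
proof -
  have "{q \<in> blowup_V n V. blowup_E n E (l, u) q} = {0..<n} \<times> {v \<in> V. E u v}"
    using assms by (auto simp: blowup_V_def blowup_E_def)
  then show ?thesis
    by (simp add: degree_def card_cartesian_product)
qed

lemma adj_mult_blowup:
  assumes "finite V" "l < n"
  shows "adj_mult (blowup_V n V) (blowup_E n E) x (l, u) = adj_mult V E (fibre_sum n x) u"
proof -
  have "adj_mult (blowup_V n V) (blowup_E n E) x (l, u)
      = (\<Sum>q\<in>{0..<n} \<times> V. if E u (snd q) then x q else 0)"
    using assms by (auto simp: adj_mult_def blowup_V_def blowup_E_def intro!: sum.cong)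
  also have "\<dots> = (\<Sum>m\<in>{0..<n}. \<Sum>v\<in>V. if E u v then x (m, v) else 0)"
    unfolding sum.cartesian_product by (rule sum.cong) auto
  also have "\<dots> = (\<Sum>v\<in>V. \<Sum>m\<in>{0..<n}. if E u v then x (m, v) else 0)"
    by (rule sum.swap)
  also have "\<dots> = adj_mult V E (fibre_sum n x) u"
    by (auto simp: adj_mult_def fibre_sum_def intro!: sum.cong)
  finally show ?thesis .
qed

lemma lap_mult_blowup:
  assumes "finite V" "l < n" "u \<in> V"
  shows "lap_mult (blowup_V n V) (blowup_E n E) x (l, u)
    = real n * real (degree V E u) * x (l, u) - adj_mult V E (fibre_sum n x) u"
proof -
  have "finite (blowup_V n V)" "(l, u) \<in> blowup_V n V"
    using assms by (auto simp: blowup_V_def)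
  then show ?thesis
    using assms by (simp add: lap_mult_eq degree_blowup adj_mult_blowup)
qed

lemma eigenspace_blowup_iff:
  assumes "finite V"
  shows "x \<in> eigenspace (blowup_V n V) (blowup_E n E) mu \<longleftrightarrow> x \<in> vecs (blowup_V n V) \<and>
    (\<forall>l<n. \<forall>u\<in>V. real n * real (degree V E u) * x (l, u) - adj_mult V E (fibre_sum n x) u
       = mu * x (l, u))"
proof -
  have "(\<forall>q\<in>blowup_V n V. P q) \<longleftrightarrow> (\<forall>l<n. \<forall>u\<in>V. P (l, u))" for P
    by (auto simp: blowup_V_def)
  then show ?thesis
    using assms by (simp add: eigenspace_iff lap_mult_blowup)
qed

lemma fibre_sum_eigenvector:
  assumes "finite V" "n > 0" "x \<in> eigenspace (blowup_V n V) (blowup_E n E) mu"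
  shows "fibre_sum n x \<in> eigenspace V E (mu / real n)"
proof -
  have x: "x \<in> vecs (blowup_V n V)"
    and eq: "\<And>l u. l < n \<Longrightarrow> u \<in> V \<Longrightarrow> real n * real (degree V E u) * x (l, u)
      - adj_mult V E (fibre_sum n x) u = mu * x (l, u)"
    using assms(3) eigenspace_blowup_iff[OF assms(1)] by auto
  have "real (degree V E u) * fibre_sum n x u - adj_mult V E (fibre_sum n x) u
      = mu / real n * fibre_sum n x u" if "u \<in> V" for u
  proof -
    have "(\<Sum>l\<in>{0..<n}. real n * real (degree V E u) * x (l, u) - adj_mult V E (fibre_sum n x) u)
        = (\<Sum>l\<in>{0..<n}. mu * x (l, u))"
      using eq that by (intro sum.cong) auto
    then have "real n * (real (degree V E u) * fibre_sum n x u - adj_mult V E (fibre_sum n x) u)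
        = mu * fibre_sum n x u"
      by (simp add: fibre_sum_def sum_subtractf sum_distrib_left algebra_simps)
    then show ?thesis
      using assms(2) by (simp add: field_simps)
  qed
  moreover have "fibre_sum n x \<in> vecs V"
    using x by (simp add: vecs_def fibre_sum_def blowup_V_def)
  ultimately show ?thesis
    using assms(1) by (simp add: eigenspace_iff lap_mult_eq)
qed

lemma blowup_lift_eigenvector:
  assumes "finite V" "y \<in> eigenspace V E lam"
  shows "blowup_lift n y \<in> eigenspace (blowup_V n V) (blowup_E n E) (real n * lam)"
proof -
  have y: "y \<in> vecs V" "\<And>u. u \<in> V \<Longrightarrow> real (degree V E u) * y u - adj_mult V E y u = lam * y u"
    using assms by (auto simp: eigenspace_iff lap_mult_eq)
  have "fibre_sum n (blowup_lift n y) = (\<lambda>v. real n * y v)"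
    unfolding fibre_sum_def blowup_lift_def by auto
  moreover have "adj_mult V E (\<lambda>v. real n * y v) u = real n * adj_mult V E y u" for u
    by (simp add: adj_mult_def sum_distrib_left if_distrib cong: if_cong)
  moreover have "real n * real (degree V E u) * y u - real n * adj_mult V E y u = real n * lam * y u"
    if "u \<in> V" for u
    using y(2)[OF that] by (metis mult.assoc right_diff_distrib)
  ultimately show ?thesis
    unfolding eigenspace_blowup_iff[OF assms(1)]
    using y(1) by (auto simp: vecs_def blowup_V_def blowup_lift_def)
qed

lemma fibre_vec_eigenvector:
  assumes "finite V" "u \<in> V" "(\<Sum>l\<in>{0..<n}. z l) = 0"
  shows "fibre_vec n u z \<in> eigenspace (blowup_V n V) (blowup_E n E) (real n * real (degree V E u))"
proof -
  have "fibre_sum n (fibre_vec n u z) v = 0" for v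
    using assms(3) by (cases "v = u") (simp_all add: fibre_sum_def fibre_vec_def)
  then have "adj_mult V E (fibre_sum n (fibre_vec n u z)) w = 0" for w
    by (simp add: adj_mult_def cong: if_cong)
  then show ?thesis
    unfolding eigenspace_blowup_iff[OF assms(1)]
    using assms(2) by (auto simp: vecs_def blowup_V_def fibre_vec_def)
qed

lemma blowup_eigenvector_fibre_const:
  assumes "finite V" "u \<in> V" "l < n" "k < n"
    and "x \<in> eigenspace (blowup_V n V) (blowup_E n E) mu" "mu \<noteq> real n * real (degree V E u)"
  shows "x (l, u) = x (k, u)"
proof -
  have "(real n * real (degree V E u) - mu) * x (i, u) = adj_mult V E (fibre_sum n x) u"
    if "i < n" for i
    using assms(1,2,5) that by (simp add: eigenspace_blowup_iff algebra_simps)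
  then show ?thesis
    using assms(3,4,6) by (metis eq_iff_diff_eq_0 mult_cancel_left)
qed

lemma eig_support_blowup:
  assumes "finite V" "n \<ge> 2" "u \<in> V" "j < n"
  shows "eig_support (blowup_V n V) (blowup_E n E) (j, u)
    = (\<lambda>x. real n * x) ` eig_support V E u \<union> {real n * real (degree V E u)}"
proof -
  have "finite (blowup_V n V)" "(j, u) \<in> blowup_V n V"
    using assms by (auto simp: blowup_V_def)
  note eig_support_blowup_eq = eig_support_eq[OF this]
  show ?thesis
  proof (intro equalityI subsetI)
    fix mu
    assume "mu \<in> eig_support (blowup_V n V) (blowup_E n E) (j, u)"
    then obtain x where x: "x \<in> eigenspace (blowup_V n V) (blowup_E n E) mu" "x (j, u) \<noteq> 0"
      by (auto simp: eig_support_blowup_eq)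
    show "mu \<in> (\<lambda>x. real n * x) ` eig_support V E u \<union> {real n * real (degree V E u)}"
    proof (cases "mu = real n * real (degree V E u)")
      case False
      have "fibre_sum n x u = real n * x (j, u)"
        using blowup_eigenvector_fibre_const[OF assms(1,3) _ assms(4) x(1) False]
        by (simp add: fibre_sum_def)
      then have "fibre_sum n x u \<noteq> 0"
        using x(2) assms(2) by simp
      moreover have "fibre_sum n x \<in> eigenspace V E (mu / real n)"
        using fibre_sum_eigenvector[OF assms(1) _ x(1)] assms(2) by simp
      ultimately have "mu / real n \<in> eig_support V E u"
        using eig_support_eq[OF assms(1,3)] by blast
      moreover have "mu = real n * (mu / real n)"
        using assms(2) by simp
      ultimately show ?thesis
        by blast
    qed simp
  next
    fix mu
    assume "mu \<in> (\<lambda>x. real n * x) ` eig_support V E u \<union> {real n * real (degree V E u)}"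
    then consider lam where "lam \<in> eig_support V E u" "mu = real n * lam"
      | "mu = real n * real (degree V E u)"
      by blast
    then show "mu \<in> eig_support (blowup_V n V) (blowup_E n E) (j, u)"
    proof cases
      case 1
      then obtain y where y: "y \<in> eigenspace V E lam" "y u \<noteq> 0"
        using eig_support_eq[OF assms(1,3)] by blast
      have "blowup_lift n y \<in> eigenspace (blowup_V n V) (blowup_E n E) mu"
        using blowup_lift_eigenvector[OF assms(1) y(1)] 1(2) by simp
      moreover have "blowup_lift n y (j, u) \<noteq> 0"
        using y(2) assms(4) by (simp add: blowup_lift_def)
      ultimately show ?thesis
        by (auto simp: eig_support_blowup_eq)
    next
      case 2
      define j' where "j' = (if j = 0 then 1 else 0 :: nat)"
      have "j' < n" "j' \<noteq> j"
        using assms(2) by (auto simp: j'_def)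
      define z where "z l = (if l = j then 1 else 0) - (if l = j' then 1 else 0 :: real)" for l
      have "(\<Sum>l\<in>{0..<n}. z l) = 0"
        using \<open>j' < n\<close> assms(4) by (simp add: z_def sum_subtractf)
      then have "fibre_vec n u z \<in> eigenspace (blowup_V n V) (blowup_E n E) mu"
        using fibre_vec_eigenvector[OF assms(1,3)] 2 by simp
      moreover have "fibre_vec n u z (j, u) \<noteq> 0"
        using \<open>j' \<noteq> j\<close> assms(4) by (simp add: fibre_vec_def z_def)
      ultimately show ?thesis
        by (auto simp: eig_support_blowup_eq)
    qed
  qed
qed

lemma lap_spectrum_blowup:
  assumes "finite V" "n \<ge> 2"
  shows "lap_spectrum (blowup_V n V) (blowup_E n E)
    = (\<lambda>x. real n * x) ` lap_spectrum V E \<union> {real n * real (degree V E u) | u. u \<in> V}"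
proof -
  have "finite (blowup_V n V)"
    using assms(1) by (simp add: blowup_V_def)
  then have "lap_spectrum (blowup_V n V) (blowup_E n E)
      = (\<Union>(j, u)\<in>{0..<n} \<times> V. eig_support (blowup_V n V) (blowup_E n E) (j, u))"
    by (simp add: lap_spectrum_eq_Union_eig_support blowup_V_def)
  also have "\<dots> = (\<Union>u\<in>V. \<Union>j\<in>{0..<n}. eig_support (blowup_V n V) (blowup_E n E) (j, u))"
    by blast
  also have "\<dots> = (\<Union>u\<in>V. (\<lambda>x. real n * x) ` eig_support V E u \<union> {real n * real (degree V E u)})"
    using assms by (intro SUP_cong refl) (auto simp: eig_support_blowup)
  also have "\<dots> = (\<lambda>x. real n * x) ` lap_spectrum V E \<union> {real n * real (degree V E u) | u. u \<in> V}"
    by (auto simp: lap_spectrum_eq_Union_eig_support[OF assms(1)])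
  finally show ?thesis .
qed

theorem proposition2:
  fixes V :: "'a set" and E :: "'a \<Rightarrow> 'a \<Rightarrow> bool" and n :: nat
  assumes "simple_graph V E" and "n \<ge> 2"
  shows "lap_spectrum (blowup_V n V) (blowup_E n E)
           = (\<lambda>x. real n * x) ` lap_spectrum V E \<union> {real n * real (degree V E u) | u. u \<in> V}
       \<and> (\<forall>u \<in> V. \<forall>j < n. eig_support (blowup_V n V) (blowup_E n E) (j, u)
           = (\<lambda>x. real n * x) ` eig_support V E u \<union> {real n * real (degree V E u)})"
proof -
  have "finite V"
    using assms(1) by (simp add: simple_graph_def)
  from lap_spectrum_blowup[OF this assms(2)] eig_support_blowup[OF this assms(2)]
  show ?thesis
    by blast
qed

end
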